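(* Fix $T\ge2$, a measurable $f:\mathbb R^{d_x}\to\mathbb R^{d_x}$, a matrix $H\in\mathbb R^{d_x\times d_x}$, and $R\ge\sqrt{d_x}+\sqrt{6\log T}$. Let $\{W_t\}$, $\{W'_t\}$ be i.i.d. $N(0,I_{d_x})$ sequences, $\bar W_t=W'_t\mathbf 1\{\|W'_t\|_2\le R\}$, and define $$X_{t+1}=f(X_t)+HW_t,\ X_0=HW_0;\qquad \bar X_{t+1}=f(\bar X_t)+H\bar W_t,\ \bar X_0=H\bar W_0.$$ Let $\mathsf P_{\bar X}$ be the joint law of $\{\bar X_t\}_{t=0}^{T-1}$. Then $$\|\Gamma_{\mathsf{dep}}(\mathsf P_{\bar X})\|_{op}\le3+\sqrt2\sum_{k=1}^{T-1}\max_{t=0,\dots,T-1-k}\ \operatorname*{ess\,sup}_{x\in\bar{\mathsf X}_t}\sqrt{\|\mathsf P_{X_{t+k}}(\cdot\mid X_t=x)-\mathsf P_{X_{t+k}}\|_{\mathsf{TV}}},$$ where the essential supremum is with respect to the law of $\bar X_t$, whose range is denoted $\bar{\mathsf X}_t$.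
   Context: Dependency matrix: for a process $\{Z_t\}_{t=0}^{T-1}$ with law $\mathsf P_Z$, $\Gamma_{\mathsf{dep}}(\mathsf P_Z)\in\mathbb R^{T\times T}$ is upper triangular with $\Gamma_{ii}=1$, $\Gamma_{ij}=0$ for $i>j$, and for $i<j$, $\Gamma_{ij}=\sqrt{2\sup_{A\in\mathcal Z_{0:i}}\|\mathsf P_{Z_{j:T-1}}(\cdot\mid A)-\mathsf P_{Z_{j:T-1}}\|_{\mathsf{TV}}}$, with $\mathcal Z_{0:i}$ the $\sigma$-algebra generated by $Z_{0:i}$. $\|\mu-\nu\|_{\mathsf{TV}}=\sup_A|\mu(A)-\nu(A)|$; $\|\cdot\|_{op}$ is the operator norm. *)

theory Defs
  imports "HOL-Probability.Probability"
begin

definition std_gauss_density :: "real^'d \<Rightarrow> real" where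
  "std_gauss_density x = (2 * pi) powr (- real CARD('d) / 2) * exp (- (norm x)\<^sup>2 / 2)"

definition tv_dist :: "'a measure \<Rightarrow> 'a measure \<Rightarrow> real" where
  "tv_dist \<mu> \<nu> = (SUP A \<in> sets \<mu>. \<bar>measure \<mu> A - measure \<nu> A\<bar>)"

abbreviation path_space :: "nat \<Rightarrow> (nat \<Rightarrow> real^'d) measure" where
  "path_space T \<equiv> PiM {..<T} (\<lambda>_. borel)"

definition past_events :: "nat \<Rightarrow> nat \<Rightarrow> (nat \<Rightarrow> real^'d) set set" where
  "past_events T i = {(\<lambda>z. restrict z {..i}) -` B \<inter> space (path_space T) | B.
                        B \<in> sets (PiM {..i} (\<lambda>_. (borel :: (real^'d) measure)))}"

definition future_law :: "nat \<Rightarrow> nat \<Rightarrow> (nat \<Rightarrow> real^'d) measure \<Rightarrow> (nat \<Rightarrow> real^'d) measure" where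
  "future_law T j P = distr P (PiM {j..<T} (\<lambda>_. borel)) (\<lambda>z. restrict z {j..<T})"

text \<open>Dependency matrix Gamma_dep(P) (indices 0..T-1) of a law P on the path space.
  P(. | A) is the conditional measure uniform_measure P A = P(. \<inter> A)/P(A), for P(A) > 0.\<close>
definition gamma_dep :: "nat \<Rightarrow> (nat \<Rightarrow> real^'d) measure \<Rightarrow> nat \<Rightarrow> nat \<Rightarrow> real" where
  "gamma_dep T P i j =
     (if i = j then 1 else if j < i then 0 else
      sqrt (2 * (SUP A \<in> {A \<in> past_events T i. measure P A > 0}.
                   tv_dist (future_law T j (uniform_measure P A)) (future_law T j P))))"

definition op_norm :: "nat \<Rightarrow> (nat \<Rightarrow> nat \<Rightarrow> real) \<Rightarrow> real" where
  "op_norm n A = (SUP x \<in> {x :: nat \<Rightarrow> real. (\<Sum>j<n. (x j)\<^sup>2) \<le> 1}.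
                    sqrt (\<Sum>i<n. (\<Sum>j<n. A i j * x j)\<^sup>2))"

fun chain_from :: "(real^'d \<Rightarrow> real^'d) \<Rightarrow> real^'d^'d \<Rightarrow> real^'d \<Rightarrow> (nat \<Rightarrow> real^'d) \<Rightarrow> nat \<Rightarrow> real^'d" where
  "chain_from f H x0 w 0 = x0"
| "chain_from f H x0 w (Suc s) = f (chain_from f H x0 w s) + H *v w s"

text \<open>The process X_0 = H W_0, X_{t+1} = f(X_t) + H W_{t+1} (fresh noise at every step).\<close>
definition proc :: "(real^'d \<Rightarrow> real^'d) \<Rightarrow> real^'d^'d \<Rightarrow> (nat \<Rightarrow> 'a \<Rightarrow> real^'d) \<Rightarrow> nat \<Rightarrow> 'a \<Rightarrow> real^'d" where
  "proc f H W t \<omega> = chain_from f H (H *v W 0 \<omega>) (\<lambda>s. W (Suc s) \<omega>) t"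

text \<open>Conditional law P_{X_{t+k}}(. | X_t = x): the k-step transition of the chain from x,
  driven by the noises W_{t+1}, ..., W_{t+k} (which are independent of X_t).\<close>
definition cond_law :: "'a measure \<Rightarrow> (real^'d \<Rightarrow> real^'d) \<Rightarrow> real^'d^'d \<Rightarrow> (nat \<Rightarrow> 'a \<Rightarrow> real^'d)
    \<Rightarrow> nat \<Rightarrow> nat \<Rightarrow> real^'d \<Rightarrow> (real^'d) measure" where
  "cond_law M f H W t k x = distr M borel (\<lambda>\<omega>. chain_from f H x (\<lambda>s. W (t + Suc s) \<omega>) k)"

end

theory Submission
  imports Defs
begin

text \<open>
  The truncated chain is Markov. For a past event A and a future event F, P(A \<inter> F) is the
  integral over A of the probability of F for the chain restarted at time i from its current
  state, so |P(F | A) - P(F)| is at most the essential supremum over x of the total variation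
  distance between the (j - i)-step kernel from x and the law of the state at time j; the
  (i, j) entry of the dependency matrix is at most the square root of twice this. Truncation
  changes a noise only when its norm exceeds R, which by a Chernoff bound for the Gaussian norm
  has probability at most T^-3; at most 2T noises are involved, so replacing the truncated
  kernel and marginal by the untruncated ones costs at most 2/T per entry. The matrix is upper
  triangular with entries bounded by a function of j - i, so by Young's inequality its operator
  norm is at most the sum of these bounds: 1 from the diagonal, at most 2 from the truncation
  errors, and sqrt 2 times the stated sum.
\<close>

section \<open>Gaussian tail of the norm\<close>

lemma std_gauss_density_eq_prod:
  "std_gauss_density (x::real^'d) = (\<Prod>b\<in>Basis. std_normal_density (x \<bullet> b))"
proof -
  have "(2*pi) powr (-1/2) = 1 / sqrt (2 * pi)"
    by (simp add: powr_minus_divide powr_half_sqrt)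
  then have "(\<Prod>b\<in>(Basis::(real^'d) set). std_normal_density (x \<bullet> b))
      = (\<Prod>b\<in>(Basis::(real^'d) set). (2*pi) powr (-1/2)) * (\<Prod>b\<in>(Basis::(real^'d) set). exp (-(x \<bullet> b)\<^sup>2/2))"
    unfolding std_normal_density_def prod.distrib[symmetric] by simp
  also have "(\<Prod>b\<in>(Basis::(real^'d) set). (2*pi) powr (-1/2)) = (2*pi) powr (- real CARD('d)/2)"
    by (simp add: powr_realpow[symmetric] powr_powr)
  also have "(\<Prod>b\<in>(Basis::(real^'d) set). exp (-(x \<bullet> b)\<^sup>2/2)) = exp (- (\<Sum>b\<in>(Basis::(real^'d) set). (x \<bullet> b)\<^sup>2)/2)"
    by (simp add: exp_sum[symmetric] sum_divide_distrib sum_negf)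
  also have "(\<Sum>b\<in>(Basis::(real^'d) set). (x \<bullet> b)\<^sup>2) = (norm x)\<^sup>2"
    using euclidean_inner[of x x] power2_norm_eq_inner[of x] by (simp add: power2_eq_square)
  finally show ?thesis by (simp add: std_gauss_density_def)
qed

lemma nn_integral_exp_sq_std_normal:
  fixes l :: real
  assumes "l < 1/2"
  shows "(\<integral>\<^sup>+t. ennreal (exp (l * t\<^sup>2) * std_normal_density t) \<partial>lborel) = ennreal (1 / sqrt (1 - 2*l))"
proof -
  define \<sigma> where "\<sigma> = 1 / sqrt (1 - 2*l)"
  have \<sigma>: "\<sigma> > 0" "\<sigma>\<^sup>2 = 1 / (1 - 2*l)" using assms by (auto simp: \<sigma>_def power_divide)
  have "exp (l * t\<^sup>2) * std_normal_density t = \<sigma> * normal_density 0 \<sigma> t" for t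
  proof -
    have "exp (l * t\<^sup>2) * std_normal_density t = 1 / sqrt (2 * pi) * exp (l * t\<^sup>2 + - t\<^sup>2 / 2)"
      unfolding std_normal_density_def exp_add by simp
    also have "l * t\<^sup>2 + - t\<^sup>2 / 2 = - (t - 0)\<^sup>2 / (2 * \<sigma>\<^sup>2)"
      using assms unfolding \<sigma>(2) by (simp add: field_simps)
    also have "1 / sqrt (2 * pi) = \<sigma> * (1 / sqrt (2 * pi * \<sigma>\<^sup>2))"
      using \<sigma>(1) by (simp add: real_sqrt_mult)
    finally show ?thesis
      unfolding normal_density_def by (simp only: mult.assoc)
  qed
  then have "(\<integral>\<^sup>+t. ennreal (exp (l * t\<^sup>2) * std_normal_density t) \<partial>lborel)
      = (\<integral>\<^sup>+t. ennreal \<sigma> * ennreal (normal_density 0 \<sigma> t) \<partial>lborel)"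
    using \<sigma>(1) by (simp add: ennreal_mult)
  also have "\<dots> = ennreal \<sigma> * (\<integral>\<^sup>+t. ennreal (normal_density 0 \<sigma> t) \<partial>lborel)"
    by (rule nn_integral_cmult) simp
  also have "(\<integral>\<^sup>+t. ennreal (normal_density 0 \<sigma> t) \<partial>lborel) = 1"
    using prob_space.emeasure_space_1[OF prob_space_normal_density[OF \<sigma>(1), of 0]]
    by (simp add: emeasure_density)
  finally show ?thesis by (simp add: \<sigma>_def)
qed

lemma nn_integral_exp_norm_sq_std_gauss:
  fixes l :: real
  assumes "0 \<le> l" "l < 1/2"
  shows "(\<integral>\<^sup>+x. ennreal (exp (l * (norm x)\<^sup>2) * std_gauss_density (x::real^'d)) \<partial>lborel)
         = ennreal ((1 / sqrt (1 - 2*l)) ^ CARD('d))"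
proof -
  define g where "g t = ennreal (exp (l * t\<^sup>2) * std_normal_density t)" for t
  have "ennreal (exp (l * (norm x)\<^sup>2) * std_gauss_density x) = (\<Prod>b\<in>Basis. g (x \<bullet> b))" for x :: "real^'d"
  proof -
    have "(norm x)\<^sup>2 = (\<Sum>b\<in>(Basis::(real^'d) set). (x \<bullet> b)\<^sup>2)"
      using euclidean_inner[of x x] power2_norm_eq_inner[of x] by (simp add: power2_eq_square)
    then have "exp (l * (norm x)\<^sup>2) = (\<Prod>b\<in>(Basis::(real^'d) set). exp (l * (x \<bullet> b)\<^sup>2))"
      by (simp add: sum_distrib_left exp_sum)
    then show ?thesis
      by (simp add: g_def std_gauss_density_eq_prod prod.distrib prod_ennreal)
  qed
  then have "(\<integral>\<^sup>+x. ennreal (exp (l * (norm x)\<^sup>2) * std_gauss_density (x::real^'d)) \<partial>lborel)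
      = (\<integral>\<^sup>+x. (\<Prod>b\<in>Basis. g ((x::real^'d) \<bullet> b)) \<partial>lborel)"
    by simp
  also have "\<dots> = (\<Prod>b\<in>(Basis::(real^'d) set). (\<integral>\<^sup>+t. g t \<partial>lborel))"
    by (rule nn_integral_lborel_prod) (auto simp: g_def)
  also have "\<dots> = ennreal (1 / sqrt (1 - 2*l)) ^ CARD('d)"
    using nn_integral_exp_sq_std_normal[OF assms(2)] by (simp add: g_def)
  finally show ?thesis using assms by (simp add: ennreal_power)
qed

lemma (in prob_space) std_gauss_norm_tail_exp_moment:
  fixes W :: "'a \<Rightarrow> real^'d"
  assumes W: "distributed M lborel W (\<lambda>x. ennreal (std_gauss_density x))"
    and l: "0 \<le> l" "l < 1/2" and R: "0 \<le> R"
  shows "prob {\<omega>\<in>space M. R < norm (W \<omega>)} \<le> (1 / sqrt (1 - 2*l)) ^ CARD('d) * exp (- l * R\<^sup>2)"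
proof -
  have [measurable]: "W \<in> borel_measurable M"
    using distributed_measurable[OF W] by simp
  define S where "S = {\<omega>\<in>space M. R < norm (W \<omega>)}"
  have [measurable]: "S \<in> sets M" unfolding S_def by measurable
  have "ennreal (exp (l * R\<^sup>2) * prob S) = (\<integral>\<^sup>+\<omega>. ennreal (exp (l * R\<^sup>2)) * indicator S \<omega> \<partial>M)"
    by (simp add: nn_integral_cmult_indicator emeasure_eq_measure ennreal_mult)
  also have "\<dots> \<le> (\<integral>\<^sup>+\<omega>. ennreal (exp (l * (norm (W \<omega>))\<^sup>2)) \<partial>M)"
  proof (rule nn_integral_mono)
    fix \<omega> assume "\<omega> \<in> space M"
    show "ennreal (exp (l * R\<^sup>2)) * indicator S \<omega> \<le> ennreal (exp (l * (norm (W \<omega>))\<^sup>2))"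
    proof (cases "\<omega> \<in> S")
      case True
      then have "R\<^sup>2 \<le> (norm (W \<omega>))\<^sup>2" using R by (intro power_mono) (auto simp: S_def)
      then show ?thesis using True l by (simp add: ennreal_leI mult_left_mono)
    qed simp
  qed
  also have "\<dots> = (\<integral>\<^sup>+x. ennreal (exp (l * (norm x)\<^sup>2)) \<partial>distr M lborel W)"
    by (simp add: nn_integral_distr)
  also have "\<dots> = (\<integral>\<^sup>+x. ennreal (exp (l * (norm x)\<^sup>2)) \<partial>density lborel (\<lambda>x. ennreal (std_gauss_density (x::real^'d))))"
    by (simp add: distributed_distr_eq_density[OF W])
  also have "\<dots> = (\<integral>\<^sup>+x. ennreal (exp (l * (norm x)\<^sup>2) * std_gauss_density (x::real^'d)) \<partial>lborel)"
    by (simp add: nn_integral_density std_gauss_density_def ennreal_mult[symmetric] mult.commute)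
  also have "\<dots> = ennreal ((1 / sqrt (1 - 2*l)) ^ CARD('d))"
    by (rule nn_integral_exp_norm_sq_std_gauss[OF l])
  finally have "exp (l * R\<^sup>2) * prob S \<le> (1 / sqrt (1 - 2*l)) ^ CARD('d)"
    using l by (subst (asm) ennreal_le_iff) auto
  then have "prob S \<le> (1 / sqrt (1 - 2*l)) ^ CARD('d) / exp (l * R\<^sup>2)"
    by (simp add: pos_le_divide_eq mult.commute)
  then show ?thesis
    unfolding S_def[symmetric] by (simp add: exp_minus divide_inverse)
qed

lemma (in prob_space) std_gauss_norm_tail:
  fixes W :: "'a \<Rightarrow> real^'d"
  assumes W: "distributed M lborel W (\<lambda>x. ennreal (std_gauss_density x))"
    and s: "0 \<le> s" and R: "sqrt (real CARD('d)) + s \<le> R"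
  shows "prob {\<omega>\<in>space M. R < norm (W \<omega>)} \<le> exp (- s\<^sup>2 / 2)"
proof -
  define d where "d = real CARD('d)"
  define q where "q = sqrt d"
  define u where "u = R - q"
  have q: "q > 0" "q\<^sup>2 = d" by (auto simp: q_def d_def)
  have u: "s \<le> u" "R = q + u" using R by (auto simp: u_def q_def d_def)
  have Rpos: "R > 0" using q u s by linarith
  \<comment> \<open>the optimal Chernoff exponent; the factor (R / sqrt d) ^ d is then absorbed by ln (1 + x) \<le> x\<close>
  define l where "l = (1 - d / R\<^sup>2) / 2"
  have "q\<^sup>2 \<le> R\<^sup>2" using q u s by (intro power_mono) auto
  then have l: "0 \<le> l" "l < 1/2" "1 - 2 * l = (q / R)\<^sup>2"
    using q Rpos by (auto simp: l_def power_divide field_simps)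
  have "prob {\<omega>\<in>space M. R < norm (W \<omega>)} \<le> (1 / sqrt (1 - 2*l)) ^ CARD('d) * exp (- l * R\<^sup>2)"
    using std_gauss_norm_tail_exp_moment[OF W l(1,2)] Rpos by simp
  also have "sqrt (1 - 2*l) = q / R"
    using q Rpos unfolding l(3) by simp
  also have "1 / (q / R) = 1 + u / q"
    using q unfolding u(2) by (simp add: field_simps)
  also have "(1 + u / q) ^ CARD('d) = exp (d * ln (1 + u / q))"
    using q u s by (simp add: d_def exp_of_nat_mult[symmetric] ln_realpow[symmetric] add_pos_nonneg)
  also have "\<dots> \<le> exp (q * u)"
  proof -
    have "d * ln (1 + u / q) \<le> d * (u / q)"
      using q u s by (intro mult_left_mono ln_add_one_self_le_self) (auto simp: d_def)
    also have "d * (u / q) = q * u" using q by (simp add: power2_eq_square field_simps)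
    finally show ?thesis by simp
  qed
  also have "exp (q * u) * exp (- l * R\<^sup>2) = exp (- u\<^sup>2 / 2)"
  proof -
    have "l * R\<^sup>2 = (R\<^sup>2 - d) / 2"
      using Rpos by (simp add: l_def field_simps)
    also have "\<dots> = q * u + u\<^sup>2 / 2"
      using q unfolding u(2) by (simp add: power2_eq_square field_simps)
    finally have "l * R\<^sup>2 = q * u + u\<^sup>2 / 2" .
    then show ?thesis by (simp add: exp_add[symmetric])
  qed
  also have "\<dots> \<le> exp (- s\<^sup>2 / 2)"
    using u s by (simp add: power_mono)
  finally show ?thesis by simp
qed

lemma (in prob_space) std_gauss_norm_tail_le_inverse_cube:
  fixes W :: "'a \<Rightarrow> real^'d" and T :: nat
  assumes W: "distributed M lborel W (\<lambda>x. ennreal (std_gauss_density x))"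
    and "1 \<le> T" and R: "sqrt (real CARD('d)) + sqrt (6 * ln (real T)) \<le> R"
  shows "prob {\<omega>\<in>space M. R < norm (W \<omega>)} \<le> 1 / real T ^ 3"
proof -
  have "prob {\<omega>\<in>space M. R < norm (W \<omega>)} \<le> exp (- (sqrt (6 * ln (real T)))\<^sup>2 / 2)"
    by (rule std_gauss_norm_tail[OF W _ R]) (use \<open>1 \<le> T\<close> in simp)
  also have "exp (- (sqrt (6 * ln (real T)))\<^sup>2 / 2) = inverse (exp (real 3 * ln (real T)))"
    using \<open>1 \<le> T\<close> by (simp add: exp_minus)
  also have "exp (real 3 * ln (real T)) = real T ^ 3"
    using \<open>1 \<le> T\<close> by (subst exp_of_nat_mult) simp
  finally show ?thesis by (simp add: inverse_eq_divide)
qed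

section \<open>Operator norm of banded upper triangular matrices\<close>

lemma L2_set_sum_le:
  assumes "finite K"
  shows "L2_set (\<lambda>i. \<Sum>k\<in>K. f k i) A \<le> (\<Sum>k\<in>K. L2_set (f k) A)"
  using assms
proof (induction K rule: finite_induct)
  case (insert a K)
  have "L2_set (\<lambda>i. f a i + (\<Sum>k\<in>K. f k i)) A \<le> L2_set (f a) A + L2_set (\<lambda>i. \<Sum>k\<in>K. f k i) A"
    by (rule L2_set_triangle_ineq)
  with insert show ?case by simp
qed (simp add: L2_set_def)

lemma L2_set_shift_le:
  fixes x :: "nat \<Rightarrow> real" and k n :: nat
  shows "L2_set (\<lambda>i. if i + k < n then x (i + k) else 0) {..<n} \<le> L2_set x {..<n}"
proof -
  have "(\<Sum>i<n. (if i + k < n then x (i + k) else 0)\<^sup>2) = (\<Sum>i\<in>{i. i + k < n}. (x (i + k))\<^sup>2)"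
    by (rule sum.mono_neutral_cong_right) auto
  also have "\<dots> = (\<Sum>j\<in>(\<lambda>i. i + k) ` {i. i + k < n}. (x j)\<^sup>2)"
    by (subst sum.reindex) (auto simp: inj_on_def)
  also have "\<dots> \<le> (\<Sum>j<n. (x j)\<^sup>2)"
    by (rule sum_mono2) auto
  finally show ?thesis unfolding L2_set_def by (simp add: power2_eq_square)
qed

lemma upper_toeplitz_bounded_row_le:
  fixes A :: "nat \<Rightarrow> nat \<Rightarrow> real" and b :: "nat \<Rightarrow> real"
  assumes A: "\<And>j. j < n \<Longrightarrow> \<bar>A i j\<bar> \<le> (if i \<le> j then b (j - i) else 0)"
  shows "\<bar>\<Sum>j<n. A i j * x j\<bar> \<le> (\<Sum>k<n. b k * (if i + k < n then \<bar>x (i + k)\<bar> else 0))"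
proof -
  have "\<bar>\<Sum>j<n. A i j * x j\<bar> \<le> (\<Sum>j<n. (if i \<le> j then b (j - i) else 0) * \<bar>x j\<bar>)"
    using A by (intro order.trans[OF sum_abs] sum_mono) (simp add: abs_mult mult_right_mono)
  also have "\<dots> = (\<Sum>j\<in>{i..<n}. b (j - i) * \<bar>x j\<bar>)"
    by (rule sum.mono_neutral_cong_right) auto
  also have "\<dots> = (\<Sum>k\<in>{..<n - i}. b k * \<bar>x (i + k)\<bar>)"
    by (rule sum.reindex_bij_witness[of _ "\<lambda>k. i + k" "\<lambda>j. j - i"]) auto
  also have "\<dots> = (\<Sum>k<n. b k * (if i + k < n then \<bar>x (i + k)\<bar> else 0))"
    by (rule sum.mono_neutral_cong_left) auto
  finally show ?thesis .
qed

text \<open>Young's inequality: A is dominated entrywise by \<open>\<Sum>k. b k * S\<^sup>k\<close> for the shift S, and \<open>\<parallel>S\<^sup>k\<parallel> \<le> 1\<close>.\<close>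

lemma op_norm_upper_toeplitz_bounded_le:
  fixes A :: "nat \<Rightarrow> nat \<Rightarrow> real" and b :: "nat \<Rightarrow> real"
  assumes A: "\<And>i j. i < n \<Longrightarrow> j < n \<Longrightarrow> \<bar>A i j\<bar> \<le> (if i \<le> j then b (j - i) else 0)"
    and b: "\<And>k. 0 \<le> b k"
  shows "op_norm n A \<le> (\<Sum>k<n. b k)"
  unfolding op_norm_def
proof (rule cSUP_least)
  have "(\<lambda>_. 0) \<in> {x :: nat \<Rightarrow> real. (\<Sum>j<n. (x j)\<^sup>2) \<le> 1}" by simp
  then show "{x :: nat \<Rightarrow> real. (\<Sum>j<n. (x j)\<^sup>2) \<le> 1} \<noteq> {}" by (metis empty_iff)
next
  fix x :: "nat \<Rightarrow> real"
  assume "x \<in> {x. (\<Sum>j<n. (x j)\<^sup>2) \<le> 1}"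
  then have x: "L2_set (\<lambda>j. \<bar>x j\<bar>) {..<n} \<le> 1" by (simp add: L2_set_def)
  define z where "z k i = (if i + k < n then \<bar>x (i + k)\<bar> else 0)" for k i
  have "sqrt (\<Sum>i<n. (\<Sum>j<n. A i j * x j)\<^sup>2) = L2_set (\<lambda>i. \<bar>\<Sum>j<n. A i j * x j\<bar>) {..<n}"
    by (simp add: L2_set_def)
  also have "\<dots> \<le> L2_set (\<lambda>i. \<Sum>k<n. b k * z k i) {..<n}"
    unfolding z_def using A by (intro L2_set_mono upper_toeplitz_bounded_row_le) auto
  also have "\<dots> \<le> (\<Sum>k<n. b k * L2_set (z k) {..<n})"
    using L2_set_sum_le[of "{..<n}" "\<lambda>k i. b k * z k i"] b by (simp add: L2_set_right_distrib)
  also have "\<dots> \<le> (\<Sum>k<n. b k)"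
  proof (intro sum_mono)
    fix k
    have "L2_set (z k) {..<n} \<le> 1"
      using order_trans[OF L2_set_shift_le[where x="\<lambda>j. \<bar>x j\<bar>"] x] unfolding z_def .
    then show "b k * L2_set (z k) {..<n} \<le> b k"
      using b[of k] by (simp add: mult_left_le)
  qed
  finally show "sqrt (\<Sum>i<n. (\<Sum>j<n. A i j * x j)\<^sup>2) \<le> (\<Sum>k<n. b k)" .
qed

lemma op_norm_le_of_entry_bounds:
  fixes G :: "nat \<Rightarrow> nat \<Rightarrow> real" and b :: "nat \<Rightarrow> real" and T :: nat
  assumes "2 \<le> T" and diag: "\<And>i. G i i = 1" and lower: "\<And>i j. j < i \<Longrightarrow> G i j = 0"
    and b: "\<And>k. 0 \<le> b k"
    and upper: "\<And>i k. 0 < k \<Longrightarrow> i + k < T \<Longrightarrow> \<bar>G i (i + k)\<bar> \<le> sqrt 2 * b k + 2 / real T"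
  shows "op_norm T G \<le> 3 + sqrt 2 * (\<Sum>k = 1..T - 1. b k)"
proof -
  define c where "c k = (if k = 0 then 1 else sqrt 2 * b k + 2 / real T)" for k
  have "\<bar>G i j\<bar> \<le> (if i \<le> j then c (j - i) else 0)" if "i < T" "j < T" for i j
    using upper[of "j - i" i] that by (cases i j rule: linorder_cases) (auto simp: c_def diag lower)
  then have "op_norm T G \<le> (\<Sum>k<T. c k)"
    by (rule op_norm_upper_toeplitz_bounded_le) (use b in \<open>auto simp: c_def\<close>)
  also have "(\<Sum>k<T. c k) = 1 + (\<Sum>k = 1..T - 1. sqrt 2 * b k + 2 / real T)"
  proof -
    have "{..<T} = insert 0 {1..T - 1}" using \<open>2 \<le> T\<close> by auto
    then show ?thesis by (simp add: c_def)
  qed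
  also have "\<dots> = 1 + sqrt 2 * (\<Sum>k = 1..T - 1. b k) + real (T - 1) * (2 / real T)"
    by (simp add: sum.distrib sum_distrib_left)
  also have "real (T - 1) * (2 / real T) \<le> 2"
    using \<open>2 \<le> T\<close> by (simp add: field_simps)
  finally show ?thesis by simp
qed

lemma op_norm_le_of_ereal_entry_bounds:
  fixes G :: "nat \<Rightarrow> nat \<Rightarrow> real" and m :: "nat \<Rightarrow> nat \<Rightarrow> ereal" and T :: nat
  assumes "2 \<le> T" and diag: "\<And>i. G i i = 1" and lower: "\<And>i j. j < i \<Longrightarrow> G i j = 0"
    and m_nonneg: "\<And>t k. 0 \<le> m t k"
    and upper: "\<And>i k b. 0 < k \<Longrightarrow> i + k < T \<Longrightarrow> 0 \<le> b \<Longrightarrow> m i k \<le> ereal b \<Longrightarrow>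
      \<bar>G i (i + k)\<bar> \<le> sqrt 2 * b + 2 / real T"
  shows "ereal (op_norm T G) \<le> 3 + ereal (sqrt 2) * (\<Sum>k = 1..T - 1. Max ((\<lambda>t. m t k) ` {0..T - 1 - k}))"
proof -
  define mx where "mx k = Max ((\<lambda>t. m t k) ` {0..T - 1 - k})" for k
  have m_le: "m t k \<le> mx k" if "t \<le> T - 1 - k" for t k
    unfolding mx_def using that by (intro Max_ge) auto
  have mx_nonneg: "0 \<le> mx k" for k
    using m_nonneg m_le[of 0] order_trans by blast
  show ?thesis
  proof (cases "\<exists>k\<in>{1..T - 1}. mx k = \<infinity>")
    case True
    then have "(\<Sum>k = 1..T - 1. mx k) = \<infinity>" by (simp add: sum_Pinfty)
    then show ?thesis unfolding mx_def by simp
  next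
    case False
    define b where "b k = real_of_ereal (mx k)" for k
    have mx_eq: "mx k = ereal (b k)" if "k \<in> {1..T - 1}" for k
      using False that mx_nonneg[of k] unfolding b_def by (cases "mx k") auto
    have b_nonneg: "0 \<le> b k" for k
      using mx_nonneg[of k] by (simp add: b_def real_of_ereal_pos)
    have "\<bar>G i (i + k)\<bar> \<le> sqrt 2 * b k + 2 / real T" if "0 < k" "i + k < T" for i k
      using that m_le[of i k] mx_eq[of k] by (intro upper b_nonneg) auto
    then have "op_norm T G \<le> 3 + sqrt 2 * (\<Sum>k = 1..T - 1. b k)"
      by (intro op_norm_le_of_entry_bounds[OF \<open>2 \<le> T\<close> diag lower b_nonneg])
    then show ?thesis
      using mx_eq unfolding mx_def[symmetric] by simp
  qed
qed

section \<open>Total variation distance\<close>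

lemma measure_diff_le_tv_dist:
  assumes "prob_space \<mu>" "prob_space \<nu>" "A \<in> sets \<mu>"
  shows "\<bar>measure \<mu> A - measure \<nu> A\<bar> \<le> tv_dist \<mu> \<nu>"
  unfolding tv_dist_def
proof (rule cSUP_upper)
  show "bdd_above ((\<lambda>A. \<bar>measure \<mu> A - measure \<nu> A\<bar>) ` sets \<mu>)"
  proof (rule bdd_aboveI2)
    fix B
    have "measure \<mu> B \<le> 1" "measure \<nu> B \<le> 1"
      using assms(1,2) by (auto intro: prob_space.prob_le_1)
    moreover have "0 \<le> measure \<mu> B" "0 \<le> measure \<nu> B" by auto
    ultimately show "\<bar>measure \<mu> B - measure \<nu> B\<bar> \<le> 1"
      unfolding abs_le_iff by (intro conjI; linarith)
  qed
qed (rule assms(3))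

lemma tv_dist_nonneg: "prob_space \<mu> \<Longrightarrow> prob_space \<nu> \<Longrightarrow> 0 \<le> tv_dist \<mu> \<nu>"
  using measure_diff_le_tv_dist[of \<mu> \<nu> "{}"] by simp

lemma tv_dist_leI:
  assumes "\<And>A. A \<in> sets \<mu> \<Longrightarrow> \<bar>measure \<mu> A - measure \<nu> A\<bar> \<le> c"
  shows "tv_dist \<mu> \<nu> \<le> c"
  unfolding tv_dist_def using sets.empty_sets assms by (blast intro: cSUP_least)

lemma tv_dist_commute: "sets \<mu> = sets \<nu> \<Longrightarrow> tv_dist \<mu> \<nu> = tv_dist \<nu> \<mu>"
  unfolding tv_dist_def by (simp add: abs_minus_commute)

lemma tv_dist_triangle:
  assumes "prob_space \<mu>" "prob_space \<nu>" "prob_space \<rho>" "sets \<mu> = sets \<rho>"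
  shows "tv_dist \<mu> \<nu> \<le> tv_dist \<mu> \<rho> + tv_dist \<rho> \<nu>"
proof (rule tv_dist_leI)
  fix A assume "A \<in> sets \<mu>"
  then have "\<bar>measure \<mu> A - measure \<rho> A\<bar> \<le> tv_dist \<mu> \<rho>" "\<bar>measure \<rho> A - measure \<nu> A\<bar> \<le> tv_dist \<rho> \<nu>"
    using assms by (auto intro: measure_diff_le_tv_dist)
  then show "\<bar>measure \<mu> A - measure \<nu> A\<bar> \<le> tv_dist \<mu> \<rho> + tv_dist \<rho> \<nu>"
    by linarith
qed

lemma (in prob_space) tv_dist_distr_le_measure_disagreement:
  assumes Z1: "Z1 \<in> measurable M N" and Z2: "Z2 \<in> measurable M N"
    and B: "B \<in> sets M" and eq: "\<And>\<omega>. \<omega> \<in> space M \<Longrightarrow> \<omega> \<notin> B \<Longrightarrow> Z1 \<omega> = Z2 \<omega>"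
  shows "tv_dist (distr M N Z1) (distr M N Z2) \<le> prob B"
proof (rule tv_dist_leI)
  fix A assume "A \<in> sets (distr M N Z1)"
  then have A: "A \<in> sets N" by simp
  define E1 where "E1 = Z1 -` A \<inter> space M"
  define E2 where "E2 = Z2 -` A \<inter> space M"
  have E: "E1 \<in> events" "E2 \<in> events" using A Z1 Z2 by (auto simp: E1_def E2_def)
  have "E1 \<subseteq> E2 \<union> B" "E2 \<subseteq> E1 \<union> B"
    using eq sets.sets_into_space[OF B] by (auto simp: E1_def E2_def)
  then have "prob E1 \<le> prob E2 + prob B" "prob E2 \<le> prob E1 + prob B"
    using E B by (auto intro: order_trans[OF finite_measure_mono measure_Un_le])
  moreover have "measure (distr M N Z1) A = prob E1" "measure (distr M N Z2) A = prob E2"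
    using A Z1 Z2 by (simp_all add: measure_distr E1_def E2_def)
  ultimately show "\<bar>measure (distr M N Z1) A - measure (distr M N Z2) A\<bar> \<le> prob B"
    by linarith
qed

lemma nn_integral_unit_interval_layer_cake:
  assumes "sigma_finite_measure \<mu>" and [measurable]: "\<phi> \<in> borel_measurable \<mu>"
    and \<phi>: "\<And>x. 0 \<le> \<phi> x" "\<And>x. \<phi> x \<le> (1::real)"
  shows "(\<integral>\<^sup>+x. ennreal (\<phi> x) \<partial>\<mu>) = (\<integral>\<^sup>+s. indicator {0..1} s * emeasure \<mu> {x\<in>space \<mu>. s < \<phi> x} \<partial>lborel)"
proof -
  interpret pair_sigma_finite \<mu> lborel
    by (intro pair_sigma_finite.intro assms(1)) (rule sigma_finite_lborel)
  define g where "g x (s::real) = (indicator {0..1} s * indicator {x\<in>space \<mu>. s < \<phi> x} x :: ennreal)" for x s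
  have g: "case_prod g \<in> borel_measurable (\<mu> \<Otimes>\<^sub>M lborel)"
    unfolding g_def by measurable
  have "(\<lambda>s. g x s) = indicator {0..<\<phi> x}" if "x \<in> space \<mu>" for x
    using that \<phi>[of x] by (auto simp: g_def fun_eq_iff split: split_indicator)
  then have "(\<integral>\<^sup>+x. ennreal (\<phi> x) \<partial>\<mu>) = (\<integral>\<^sup>+x. (\<integral>\<^sup>+s. g x s \<partial>lborel) \<partial>\<mu>)"
    using \<phi> by (intro nn_integral_cong) simp
  also have "\<dots> = (\<integral>\<^sup>+s. (\<integral>\<^sup>+x. g x s \<partial>\<mu>) \<partial>lborel)"
    by (rule Fubini'[OF g, symmetric])
  also have "\<dots> = (\<integral>\<^sup>+s. indicator {0..1} s * emeasure \<mu> {x\<in>space \<mu>. s < \<phi> x} \<partial>lborel)"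
    unfolding g_def by (subst nn_integral_cmult) simp_all
  finally show ?thesis .
qed

lemma nn_integral_le_plus_tv_dist:
  assumes P: "prob_space \<mu>" "prob_space \<nu>" and S: "sets \<mu> = sets \<nu>"
    and \<phi>_\<mu>[measurable]: "\<phi> \<in> borel_measurable \<mu>" and \<phi>: "\<And>x. 0 \<le> \<phi> x" "\<And>x. \<phi> x \<le> (1::real)"
  shows "(\<integral>\<^sup>+x. ennreal (\<phi> x) \<partial>\<mu>) \<le> (\<integral>\<^sup>+x. ennreal (\<phi> x) \<partial>\<nu>) + ennreal (tv_dist \<mu> \<nu>)"
proof -
  interpret m: prob_space \<mu> by (rule P)
  interpret n: prob_space \<nu> by (rule P)
  have \<phi>_\<nu>[measurable]: "\<phi> \<in> borel_measurable \<nu>" using S by (simp cong: measurable_cong_sets)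
  have sp: "space \<mu> = space \<nu>" using S by (rule sets_eq_imp_space_eq)
  define L where "L \<rho> s = emeasure \<rho> {x\<in>space \<rho>. s < \<phi> x}" for \<rho> s
  have L_le: "L \<mu> s \<le> L \<nu> s + ennreal (tv_dist \<mu> \<nu>)" for s
  proof -
    have "{x\<in>space \<mu>. s < \<phi> x} \<in> sets \<mu>" by measurable
    then have "measure \<mu> {x\<in>space \<mu>. s < \<phi> x} \<le> measure \<nu> {x\<in>space \<mu>. s < \<phi> x} + tv_dist \<mu> \<nu>"
      using measure_diff_le_tv_dist[OF P] by fastforce
    then show ?thesis
      unfolding L_def sp m.emeasure_eq_measure n.emeasure_eq_measure
      by (simp add: ennreal_plus[symmetric] tv_dist_nonneg[OF P] del: ennreal_plus)
  qed
  have [measurable]: "L \<nu> \<in> borel_measurable lborel"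
    unfolding L_def by measurable
  have "(\<integral>\<^sup>+x. ennreal (\<phi> x) \<partial>\<mu>) = (\<integral>\<^sup>+s. indicator {0..1} s * L \<mu> s \<partial>lborel)"
    unfolding L_def by (rule nn_integral_unit_interval_layer_cake[OF _ \<phi>_\<mu> \<phi>]) unfold_locales
  also have "\<dots> \<le> (\<integral>\<^sup>+s. indicator {0..1} s * L \<nu> s + indicator {0..1} s * ennreal (tv_dist \<mu> \<nu>) \<partial>lborel)"
    using L_le by (intro nn_integral_mono) (auto simp: distrib_left[symmetric] intro!: mult_left_mono)
  also have "\<dots> = (\<integral>\<^sup>+s. indicator {0..1} s * L \<nu> s \<partial>lborel) + ennreal (tv_dist \<mu> \<nu>)"
    by (subst nn_integral_add) (simp_all add: nn_integral_cmult_indicator mult.commute)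
  also have "(\<integral>\<^sup>+s. indicator {0..1} s * L \<nu> s \<partial>lborel) = (\<integral>\<^sup>+x. ennreal (\<phi> x) \<partial>\<nu>)"
    unfolding L_def by (rule nn_integral_unit_interval_layer_cake[OF _ \<phi>_\<nu> \<phi>, symmetric]) unfold_locales
  finally show ?thesis .
qed

lemma nn_integral_near_of_tv_dist_le:
  assumes "prob_space \<mu>" "prob_space \<nu>" and S: "sets \<mu> = sets \<nu>" and "tv_dist \<mu> \<nu> \<le> E"
    and "\<phi> \<in> borel_measurable \<mu>" and \<phi>: "\<And>x. 0 \<le> \<phi> x" "\<And>x. \<phi> x \<le> (1::real)"
  shows "(\<integral>\<^sup>+x. ennreal (\<phi> x) \<partial>\<mu>) \<le> (\<integral>\<^sup>+x. ennreal (\<phi> x) \<partial>\<nu>) + ennreal E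
    \<and> (\<integral>\<^sup>+x. ennreal (\<phi> x) \<partial>\<nu>) \<le> (\<integral>\<^sup>+x. ennreal (\<phi> x) \<partial>\<mu>) + ennreal E"
proof -
  have "\<phi> \<in> borel_measurable \<nu>" using assms(5) S by (simp cong: measurable_cong_sets)
  then have "(\<integral>\<^sup>+x. ennreal (\<phi> x) \<partial>\<mu>) \<le> (\<integral>\<^sup>+x. ennreal (\<phi> x) \<partial>\<nu>) + ennreal (tv_dist \<mu> \<nu>)"
    and "(\<integral>\<^sup>+x. ennreal (\<phi> x) \<partial>\<nu>) \<le> (\<integral>\<^sup>+x. ennreal (\<phi> x) \<partial>\<mu>) + ennreal (tv_dist \<nu> \<mu>)"
    using nn_integral_le_plus_tv_dist[OF assms(1,2) S assms(5) \<phi>]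
      nn_integral_le_plus_tv_dist[OF assms(2,1) S[symmetric] _ \<phi>] by simp_all
  moreover have "ennreal (tv_dist \<mu> \<nu>) \<le> ennreal E" "ennreal (tv_dist \<nu> \<mu>) \<le> ennreal E"
    using assms(4) tv_dist_commute[OF S] by (simp_all add: ennreal_leI)
  ultimately show ?thesis
    by (meson add_left_mono order_trans)
qed

section \<open>The dependency matrix of a uniformly mixing process\<close>

text \<open>
  A bound E on the uniform mixing coefficient between \<open>Z\<^sub>0\<^sub>:\<^sub>i\<close> and \<open>Z\<^sub>j\<^sub>:\<^sub>T\<^sub>-\<^sub>1\<close>,
  i.e. |P(F | A) - P(F)| \<le> E, multiplied out so that null events A need no special treatment.
\<close>

definition phi_mixing_le :: "'a measure \<Rightarrow> ('a \<Rightarrow> nat \<Rightarrow> real^'d) \<Rightarrow> nat \<Rightarrow> nat \<Rightarrow> nat \<Rightarrow> real \<Rightarrow> bool" where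
  "phi_mixing_le M Z T i j E \<longleftrightarrow>
    (\<forall>B\<in>sets (PiM {..i} (\<lambda>_. borel)). \<forall>C\<in>sets (PiM {j..<T} (\<lambda>_. borel)).
      \<bar>measure M ({\<omega>\<in>space M. restrict (Z \<omega>) {..i} \<in> B} \<inter> {\<omega>\<in>space M. restrict (Z \<omega>) {j..<T} \<in> C})
        - measure M {\<omega>\<in>space M. restrict (Z \<omega>) {..i} \<in> B} * measure M {\<omega>\<in>space M. restrict (Z \<omega>) {j..<T} \<in> C}\<bar>
      \<le> measure M {\<omega>\<in>space M. restrict (Z \<omega>) {..i} \<in> B} * E)"

lemma restrict_path_measurable:
  "I \<subseteq> {..<T} \<Longrightarrow> (\<lambda>z. restrict z I) \<in> measurable (path_space T) (PiM I (\<lambda>_. borel))"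
  by (intro measurable_restrict) (auto intro!: measurable_component_singleton)

lemma measure_future_law:
  assumes "sets Q = sets (path_space T)" and C: "C \<in> sets (PiM {j..<T} (\<lambda>_. borel))"
  shows "measure (future_law T j Q) C = measure Q ((\<lambda>z. restrict z {j..<T}) -` C \<inter> space (path_space T))"
proof -
  have "(\<lambda>z. restrict z {j..<T}) \<in> measurable Q (PiM {j..<T} (\<lambda>_. borel))"
    using restrict_path_measurable[of "{j..<T}" T] assms(1) by (simp cong: measurable_cong_sets)
  moreover have "space Q = space (path_space T)"
    using assms(1) by (rule sets_eq_imp_space_eq)
  ultimately show ?thesis
    unfolding future_law_def using measure_distr C by metis
qed

lemma (in prob_space) tv_dist_future_law_conditional_le:
  fixes Z :: "'a \<Rightarrow> nat \<Rightarrow> real^'d"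
  assumes Z: "Z \<in> measurable M (path_space T)" and "i < T" and mixing: "phi_mixing_le M Z T i j E"
    and A: "A \<in> past_events T i" "measure (distr M (path_space T) Z) A > 0"
  shows "tv_dist (future_law T j (uniform_measure (distr M (path_space T) Z) A))
                 (future_law T j (distr M (path_space T) Z)) \<le> E"
proof (rule tv_dist_leI)
  define P where "P = distr M (path_space T) Z"
  interpret P: prob_space P unfolding P_def by (rule prob_space_distr[OF Z])
  have sets_P: "sets P = sets (path_space T)" by (simp add: P_def)
  have measure_P: "measure P S = prob (Z -` S \<inter> space M)" if "S \<in> sets (path_space T)" for S
    using that Z by (simp add: P_def measure_distr)
  from A obtain B where B: "B \<in> sets (PiM {..i} (\<lambda>_. borel))"
    and A_eq: "A = (\<lambda>z. restrict z {..i}) -` B \<inter> space (path_space T)"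
    unfolding past_events_def by auto
  have A_sets: "A \<in> sets (path_space T)"
    unfolding A_eq using \<open>i < T\<close> by (intro measurable_sets[OF restrict_path_measurable B]) auto
  define A' where "A' = {\<omega>\<in>space M. restrict (Z \<omega>) {..i} \<in> B}"
  fix C assume "C \<in> sets (future_law T j (uniform_measure P A))"
  then have C: "C \<in> sets (PiM {j..<T} (\<lambda>_. borel))" by (simp add: future_law_def)
  define F where "F = {\<omega>\<in>space M. restrict (Z \<omega>) {j..<T} \<in> C}"
  define D where "D = (\<lambda>z. restrict z {j..<T}) -` C \<inter> space (path_space T)"
  have D_sets: "D \<in> sets (path_space T)"
    unfolding D_def by (intro measurable_sets[OF restrict_path_measurable C]) auto
  have "Z -` A \<inter> space M = A'" "Z -` (A \<inter> D) \<inter> space M = A' \<inter> F" "Z -` D \<inter> space M = F"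
    using measurable_space[OF Z] by (auto simp: A_eq D_def A'_def F_def)
  then have PA: "measure P A = prob A'" and PAD: "measure P (A \<inter> D) = prob (A' \<inter> F)"
    and PD: "measure P D = prob F"
    using A_sets D_sets by (simp_all add: measure_P)
  have pos: "prob A' > 0"
    using A(2) unfolding P_def[symmetric] PA .
  then have "emeasure P A \<noteq> 0"
    using PA by (simp add: P.emeasure_eq_measure)
  then have "measure (future_law T j (uniform_measure P A)) C = prob (A' \<inter> F) / prob A'"
    using measure_future_law[of "uniform_measure P A", OF _ C] D_sets sets_P PA PAD
    by (simp add: P.emeasure_eq_measure D_def)
  moreover have "measure (future_law T j P) C = prob F"
    using measure_future_law[OF sets_P C] PD by (simp add: D_def)
  moreover have "\<bar>prob (A' \<inter> F) - prob A' * prob F\<bar> \<le> prob A' * E"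
    using mixing B C unfolding phi_mixing_le_def A'_def F_def by blast
  moreover have "\<bar>prob (A' \<inter> F) / prob A' - prob F\<bar> = \<bar>prob (A' \<inter> F) - prob A' * prob F\<bar> / prob A'"
    using pos by (simp add: field_simps)
  ultimately show "\<bar>measure (future_law T j (uniform_measure P A)) C - measure (future_law T j P) C\<bar> \<le> E"
    using pos by (simp add: divide_le_eq mult.commute)
qed

lemma (in prob_space) abs_gamma_dep_le:
  fixes Z :: "'a \<Rightarrow> nat \<Rightarrow> real^'d"
  assumes Z: "Z \<in> measurable M (path_space T)" and "i < j" "j < T" and "0 \<le> E"
    and mixing: "phi_mixing_le M Z T i j E"
  shows "\<bar>gamma_dep T (distr M (path_space T) Z) i j\<bar> \<le> sqrt (2 * E)"
proof -
  define P where "P = distr M (path_space T) Z"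
  interpret P: prob_space P unfolding P_def by (rule prob_space_distr[OF Z])
  define S where "S = {A \<in> past_events T i. measure P A > 0}"
  define tv where "tv A = tv_dist (future_law T j (uniform_measure P A)) (future_law T j P)" for A
  have tv_le: "tv A \<le> E" if "A \<in> S" for A
    using that \<open>i < j\<close> \<open>j < T\<close> unfolding tv_def S_def P_def
    by (intro tv_dist_future_law_conditional_le[OF Z _ mixing]) auto
  have space_S: "space P \<in> S"
  proof -
    have "space P = (\<lambda>z. restrict z {..i}) -` space (PiM {..i} (\<lambda>_. borel)) \<inter> space (path_space T)"
      by (auto simp: P_def space_PiM)
    then show ?thesis
      unfolding S_def past_events_def using P.prob_space by auto
  qed
  have "0 \<le> tv (space P)"
  proof -
    have "(\<lambda>z. restrict z {j..<T}) \<in> measurable P (PiM {j..<T} (\<lambda>_. borel))"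
      using restrict_path_measurable[of "{j..<T}" T] by (simp add: P_def)
    moreover have "prob_space (uniform_measure P (space P))"
      by (intro prob_space_uniform_measure) (simp_all add: P.emeasure_space_1)
    ultimately show ?thesis
      unfolding tv_def future_law_def
      by (intro tv_dist_nonneg prob_space.prob_space_distr P.prob_space_distr)
        (simp_all cong: measurable_cong_sets)
  qed
  then have "0 \<le> (SUP A\<in>S. tv A)" "(SUP A\<in>S. tv A) \<le> E"
    using space_S tv_le by (auto intro!: cSUP_upper2 cSUP_least bdd_aboveI2[where M=E])
  then show ?thesis
    using \<open>i < j\<close> unfolding gamma_dep_def P_def[symmetric] S_def[symmetric] tv_def[symmetric]
    by simp
qed

section \<open>The noise-driven chain and its Markov property\<close>

lemma chain_from_add:
  "chain_from f H x0 w (a + b) = chain_from f H (chain_from f H x0 w a) (\<lambda>s. w (a + s)) b"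
  by (induction b) auto

lemma chain_from_cong:
  "(\<And>s. s < k \<Longrightarrow> w s = w' s) \<Longrightarrow> chain_from f H x0 w k = chain_from f H x0 w' k"
  by (induction k) auto

lemma matrix_vector_mult_borel_measurable: "(\<lambda>x. (H::real^'n^'m) *v x) \<in> borel_measurable borel"
  by (intro borel_measurable_continuous_onI matrix_vector_mult_linear_continuous_on)

lemma chain_from_measurable:
  assumes f: "f \<in> borel_measurable borel"
    and x0: "x0 \<in> borel_measurable N"
    and w: "\<And>s. s < k \<Longrightarrow> (\<lambda>n. w n s) \<in> borel_measurable N"
  shows "(\<lambda>n. chain_from f H (x0 n) (w n) k) \<in> borel_measurable N"
  using w
proof (induction k)
  case (Suc k)
  have "(\<lambda>n. f (chain_from f H (x0 n) (w n) k)) \<in> borel_measurable N"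
    using measurable_compose[OF Suc.IH f] Suc.prems by simp
  moreover have "(\<lambda>n. H *v w n k) \<in> borel_measurable N"
    using measurable_compose[OF Suc.prems[of k] matrix_vector_mult_borel_measurable] by simp
  ultimately show ?case by simp
qed (simp add: x0)

definition driven_chain :: "(real^'d \<Rightarrow> real^'d) \<Rightarrow> real^'d^'d \<Rightarrow> (nat \<Rightarrow> real^'d) \<Rightarrow> nat \<Rightarrow> real^'d" where
  "driven_chain f H w t = chain_from f H (H *v w 0) (\<lambda>s. w (Suc s)) t"

lemma proc_eq_driven_chain: "proc f H V t \<omega> = driven_chain f H (\<lambda>s. V s \<omega>) t"
  by (simp add: proc_def driven_chain_def)

lemma driven_chain_restrict:
  "t \<le> m \<Longrightarrow> driven_chain f H (\<lambda>s\<in>{..m}. w s) t = driven_chain f H w t"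
  unfolding driven_chain_def by (auto intro!: chain_from_cong)

lemma proc_split:
  assumes "j \<le> t"
  shows "proc f H V t \<omega> = chain_from f H (proc f H V j \<omega>) (\<lambda>s. V (j + Suc s) \<omega>) (t - j)"
  using chain_from_add[of f H _ _ j "t - j"] assms by (simp add: proc_def)

lemma driven_chain_measurable:
  assumes f: "f \<in> borel_measurable borel" and w: "\<And>s. s \<le> t \<Longrightarrow> (\<lambda>n. w n s) \<in> borel_measurable N"
  shows "(\<lambda>n. driven_chain f H (w n) t) \<in> borel_measurable N"
  unfolding driven_chain_def
proof (rule chain_from_measurable[OF f])
  show "(\<lambda>n. H *v w n 0) \<in> borel_measurable N"
    using measurable_compose[OF w[of 0] matrix_vector_mult_borel_measurable] by simp
qed (use w in auto)

lemma proc_measurable: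
  assumes "f \<in> borel_measurable borel" and "\<And>s. V s \<in> borel_measurable M"
  shows "proc f H V t \<in> borel_measurable M"
  unfolding proc_eq_driven_chain by (rule driven_chain_measurable) (use assms in auto)

lemma (in prob_space) prob_space_cond_law:
  assumes "f \<in> borel_measurable borel" and "\<And>s. W s \<in> borel_measurable M"
  shows "prob_space (cond_law M f H W t k x)"
  unfolding cond_law_def by (intro prob_space_distr chain_from_measurable) (use assms in auto)

lemma (in prob_space) nn_integral_indep_var_freeze:
  assumes ind: "indep_var N1 Y N2 U" and g: "g \<in> borel_measurable (N1 \<Otimes>\<^sub>M N2)"
  shows "(\<integral>\<^sup>+\<omega>. g (Y \<omega>, U \<omega>) \<partial>M) = (\<integral>\<^sup>+\<omega>. (\<integral>\<^sup>+\<omega>'. g (Y \<omega>, U \<omega>') \<partial>M) \<partial>M)"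
proof -
  have Y[measurable]: "Y \<in> measurable M N1" and [measurable]: "U \<in> measurable M N2"
    using indep_var_rv1[OF ind] indep_var_rv2[OF ind] .
  interpret pU: prob_space "distr M N2 U" by (rule prob_space_distr) simp
  have sets_eq: "sets (distr M N1 Y \<Otimes>\<^sub>M distr M N2 U) = sets (N1 \<Otimes>\<^sub>M N2)"
    by (intro sets_pair_measure_cong) auto
  have g': "g \<in> borel_measurable (distr M N1 Y \<Otimes>\<^sub>M distr M N2 U)"
    using g by (simp cong: measurable_cong_sets add: sets_eq)
  define h where "h y = (\<integral>\<^sup>+u. g (y, u) \<partial>distr M N2 U)" for y
  have hm: "h \<in> borel_measurable N1"
  proof -
    have "h \<in> borel_measurable (distr M N1 Y)"
      unfolding h_def by (rule pU.borel_measurable_nn_integral_fst[OF g'])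
    then show ?thesis by (simp cong: measurable_cong_sets)
  qed
  have "(\<integral>\<^sup>+\<omega>. g (Y \<omega>, U \<omega>) \<partial>M) = (\<integral>\<^sup>+p. g p \<partial>distr M (N1 \<Otimes>\<^sub>M N2) (\<lambda>\<omega>. (Y \<omega>, U \<omega>)))"
    by (rule nn_integral_distr[symmetric]) (use g in measurable)
  also have "distr M (N1 \<Otimes>\<^sub>M N2) (\<lambda>\<omega>. (Y \<omega>, U \<omega>)) = distr M N1 Y \<Otimes>\<^sub>M distr M N2 U"
    using ind unfolding indep_var_distribution_eq by simp
  also have "(\<integral>\<^sup>+p. g p \<partial>(distr M N1 Y \<Otimes>\<^sub>M distr M N2 U)) = (\<integral>\<^sup>+y. h y \<partial>distr M N1 Y)"
    unfolding h_def by (rule pU.nn_integral_fst[OF g', symmetric])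
  also have "\<dots> = (\<integral>\<^sup>+\<omega>. h (Y \<omega>) \<partial>M)"
    by (rule nn_integral_distr) (use hm in auto)
  also have "\<dots> = (\<integral>\<^sup>+\<omega>. (\<integral>\<^sup>+\<omega>'. g (Y \<omega>, U \<omega>') \<partial>M) \<partial>M)"
  proof (intro nn_integral_cong)
    fix \<omega> assume \<omega>: "\<omega> \<in> space M"
    have "(\<lambda>u. g (Y \<omega>, u)) \<in> borel_measurable N2"
      using g \<omega> Y by (auto intro!: measurable_Pair2' simp: measurable_space)
    then show "h (Y \<omega>) = (\<integral>\<^sup>+\<omega>'. g (Y \<omega>, U \<omega>') \<partial>M)"
      unfolding h_def by (subst nn_integral_distr) auto
  qed
  finally show ?thesis .
qed

lemma (in prob_space) prob_inter_diff_le_of_nn_integral: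
  assumes A: "A \<in> events" and F: "F \<in> events" and p: "p \<in> borel_measurable M" and "0 \<le> E"
    and AF: "emeasure M (A \<inter> F) = (\<integral>\<^sup>+\<omega>. indicator A \<omega> * p \<omega> \<partial>M)"
    and p_near: "AE \<omega> in M. p \<omega> \<le> emeasure M F + ennreal E \<and> emeasure M F \<le> p \<omega> + ennreal E"
  shows "\<bar>prob (A \<inter> F) - prob A * prob F\<bar> \<le> prob A * E"
proof -
  have "emeasure M (A \<inter> F) \<le> (\<integral>\<^sup>+\<omega>. (emeasure M F + ennreal E) * indicator A \<omega> \<partial>M)"
    unfolding AF using p_near
    by (intro nn_integral_mono_AE) (auto elim!: eventually_mono intro!: mult_right_mono split: split_indicator)
  also have "\<dots> = (emeasure M F + ennreal E) * emeasure M A"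
    using A by (rule nn_integral_cmult_indicator)
  finally have "ennreal (prob (A \<inter> F)) \<le> ennreal ((prob F + E) * prob A)"
    using \<open>0 \<le> E\<close> by (simp add: emeasure_eq_measure ennreal_mult ennreal_plus[symmetric] del: ennreal_plus)
  then have upper: "prob (A \<inter> F) \<le> (prob F + E) * prob A"
    using \<open>0 \<le> E\<close> by (subst (asm) ennreal_le_iff) auto
  have "emeasure M F * emeasure M A = (\<integral>\<^sup>+\<omega>. emeasure M F * indicator A \<omega> \<partial>M)"
    using A by (rule nn_integral_cmult_indicator[symmetric])
  also have "\<dots> \<le> (\<integral>\<^sup>+\<omega>. indicator A \<omega> * p \<omega> + ennreal E * indicator A \<omega> \<partial>M)"
    by (rule nn_integral_mono_AE) (use p_near in \<open>eventually_elim, auto split: split_indicator\<close>)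
  also have "\<dots> = emeasure M (A \<inter> F) + ennreal E * emeasure M A"
    using A p by (simp add: AF nn_integral_add nn_integral_cmult_indicator)
  finally have "ennreal (prob F * prob A) \<le> ennreal (prob (A \<inter> F) + E * prob A)"
    using \<open>0 \<le> E\<close> by (simp add: emeasure_eq_measure ennreal_mult ennreal_plus)
  then have lower: "prob F * prob A \<le> prob (A \<inter> F) + E * prob A"
    using \<open>0 \<le> E\<close> by (subst (asm) ennreal_le_iff) auto
  show ?thesis
    using upper lower by (simp add: abs_le_iff algebra_simps)
qed

locale noise_driven_process = prob_space M
  for M :: "'a measure" +
  fixes f :: "real^'d \<Rightarrow> real^'d" and H :: "real^'d^'d" and V :: "nat \<Rightarrow> 'a \<Rightarrow> real^'d"
  assumes f_measurable[measurable]: "f \<in> borel_measurable borel"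
    and indep_noise: "indep_vars (\<lambda>_. borel) V UNIV"
begin

abbreviation X :: "nat \<Rightarrow> 'a \<Rightarrow> real^'d" where
  "X \<equiv> proc f H V"

definition noise_after :: "nat \<Rightarrow> 'a \<Rightarrow> nat \<Rightarrow> real^'d" where
  "noise_after m \<omega> = (\<lambda>s. V (m + Suc s) \<omega>)"

lemma noise_measurable[measurable]: "V s \<in> borel_measurable M"
  using indep_noise unfolding indep_vars_def by auto

lemma X_measurable[measurable]: "X t \<in> borel_measurable M"
  by (rule proc_measurable) simp_all

lemma noise_after_measurable[measurable]: "noise_after m \<in> measurable M (PiM UNIV (\<lambda>_. borel))"
  unfolding noise_after_def by (rule measurable_PiM_single') simp_all

lemma X_split: "j \<le> t \<Longrightarrow> X t \<omega> = chain_from f H (X j \<omega>) (noise_after j \<omega>) (t - j)"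
  unfolding noise_after_def by (rule proc_split)

lemma cond_law_eq: "cond_law M f H V i k y = distr M borel (\<lambda>\<omega>. chain_from f H y (noise_after i \<omega>) k)"
  by (simp add: cond_law_def noise_after_def)

lemma chain_from_noise_after_measurable[measurable]:
  "(\<lambda>\<omega>. chain_from f H y (noise_after i \<omega>) k) \<in> borel_measurable M"
  unfolding noise_after_def by (rule chain_from_measurable) auto

lemma X_path_measurable[measurable]:
  "(\<lambda>\<omega>. \<lambda>t\<in>I. X t \<omega>) \<in> measurable M (PiM I (\<lambda>_. borel))"
  by (intro measurable_restrict) simp

lemma X_path_event: "B \<in> sets (PiM I (\<lambda>_. borel)) \<Longrightarrow> {\<omega>\<in>space M. (\<lambda>t\<in>I. X t \<omega>) \<in> B} \<in> events"
  using measurable_sets[OF X_path_measurable] by (simp add: vimage_def Int_def conj_commute)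

lemma nn_integral_markov:
  assumes "i \<le> m"
    and g[measurable]: "g \<in> borel_measurable (PiM {..i} (\<lambda>_. borel))"
    and \<Phi>[measurable]: "\<Phi> \<in> borel_measurable (borel \<Otimes>\<^sub>M PiM UNIV (\<lambda>_. borel))"
  shows "(\<integral>\<^sup>+\<omega>. g (\<lambda>t\<in>{..i}. X t \<omega>) * \<Phi> (X m \<omega>, noise_after m \<omega>) \<partial>M)
       = (\<integral>\<^sup>+\<omega>. g (\<lambda>t\<in>{..i}. X t \<omega>) * (\<integral>\<^sup>+\<omega>'. \<Phi> (X m \<omega>, noise_after m \<omega>') \<partial>M) \<partial>M)"
proof -
  let ?N = "PiM {..m} (\<lambda>_. borel) \<Otimes>\<^sub>M PiM {Suc m..} (\<lambda>_. borel :: (real^'d) measure)"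
  define Y where "Y \<omega> = (\<lambda>s\<in>{..m}. V s \<omega>)" for \<omega>
  define U where "U \<omega> = (\<lambda>s\<in>{Suc m..}. V s \<omega>)" for \<omega>
  have ind: "indep_var (PiM {..m} (\<lambda>_. borel)) Y (PiM {Suc m..} (\<lambda>_. borel)) U"
    unfolding Y_def U_def by (rule indep_var_restrict[OF indep_noise]) auto
  define h where "h p = g (\<lambda>t\<in>{..i}. driven_chain f H (fst p) t) *
      \<Phi> (driven_chain f H (fst p) m, \<lambda>s. snd p (m + Suc s))" for p
  have [measurable]: "(\<lambda>p. fst p s) \<in> borel_measurable ?N" if "s \<le> m" for s
    using that measurable_compose[OF measurable_fst measurable_component_singleton[of s "{..m}"]] by auto
  have [measurable]: "(\<lambda>p. snd p s) \<in> borel_measurable ?N" if "Suc m \<le> s" for s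
    using that measurable_compose[OF measurable_snd measurable_component_singleton[of s "{Suc m..}"]] by auto
  have [measurable]: "(\<lambda>p. driven_chain f H (fst p) t) \<in> borel_measurable ?N" if "t \<le> m" for t
    using that by (intro driven_chain_measurable) auto
  have "(\<lambda>p. \<lambda>t\<in>{..i}. driven_chain f H (fst p) t) \<in> measurable ?N (PiM {..i} (\<lambda>_. borel))"
    using \<open>i \<le> m\<close> by (intro measurable_restrict) auto
  moreover have "(\<lambda>p. (driven_chain f H (fst p) m, \<lambda>s. snd p (m + Suc s))) \<in> measurable ?N (borel \<Otimes>\<^sub>M PiM UNIV (\<lambda>_. borel))"
    by (intro measurable_Pair measurable_PiM_single') simp_all
  ultimately have h: "h \<in> borel_measurable ?N"
    unfolding h_def using measurable_compose[OF _ g] measurable_compose[OF _ \<Phi>] by measurable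
  have h_eq: "h (Y \<omega>, U \<omega>') = g (\<lambda>t\<in>{..i}. X t \<omega>) * \<Phi> (X m \<omega>, noise_after m \<omega>')" for \<omega> \<omega>'
  proof -
    have "driven_chain f H (Y \<omega>) t = X t \<omega>" if "t \<le> m" for t
      using that by (simp add: Y_def driven_chain_restrict proc_eq_driven_chain)
    moreover have "(\<lambda>s. U \<omega>' (m + Suc s)) = noise_after m \<omega>'"
      by (simp add: U_def noise_after_def)
    ultimately show ?thesis
      using \<open>i \<le> m\<close> unfolding h_def by (simp cong: restrict_cong)
  qed
  have "(\<integral>\<^sup>+\<omega>. (\<integral>\<^sup>+\<omega>'. h (Y \<omega>, U \<omega>') \<partial>M) \<partial>M)
      = (\<integral>\<^sup>+\<omega>. g (\<lambda>t\<in>{..i}. X t \<omega>) * (\<integral>\<^sup>+\<omega>'. \<Phi> (X m \<omega>, noise_after m \<omega>') \<partial>M) \<partial>M)"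
    unfolding h_eq by (intro nn_integral_cong nn_integral_cmult) measurable
  then show ?thesis
    using nn_integral_indep_var_freeze[OF ind h] unfolding h_eq by simp
qed

definition future_prob :: "nat \<Rightarrow> nat \<Rightarrow> (nat \<Rightarrow> real^'d) set \<Rightarrow> real^'d \<Rightarrow> real" where
  "future_prob j T C y = prob {\<omega>\<in>space M. (\<lambda>t\<in>{j..<T}. chain_from f H y (noise_after j \<omega>) (t - j)) \<in> C}"

lemma future_path_measurable:
  "(\<lambda>p. \<lambda>t\<in>{j..<T}. chain_from f H (fst p) (snd p) (t - j))
     \<in> measurable (borel \<Otimes>\<^sub>M PiM UNIV (\<lambda>_. borel)) (PiM {j..<T} (\<lambda>_. borel))"
  by (intro measurable_restrict chain_from_measurable) auto

lemma future_prob_measurable[measurable]: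
  assumes C: "C \<in> sets (PiM {j..<T} (\<lambda>_. borel))"
  shows "future_prob j T C \<in> borel_measurable borel"
proof -
  define G where "G = (\<lambda>p. \<lambda>t\<in>{j..<T}. chain_from f H (fst p) (noise_after j (snd p)) (t - j))"
  have "(\<lambda>p. (fst p, noise_after j (snd p))) \<in> measurable (borel \<Otimes>\<^sub>M M) (borel \<Otimes>\<^sub>M PiM UNIV (\<lambda>_. borel))"
    by measurable
  from measurable_compose[OF this future_path_measurable]
  have "G \<in> measurable (borel \<Otimes>\<^sub>M M) (PiM {j..<T} (\<lambda>_. borel))"
    by (simp add: G_def comp_def)
  then have "G -` C \<inter> space (borel \<Otimes>\<^sub>M M) \<in> sets (borel \<Otimes>\<^sub>M M)"
    using C by (rule measurable_sets)
  moreover have "G -` C \<inter> space (borel \<Otimes>\<^sub>M M)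
      = {p \<in> space (borel \<Otimes>\<^sub>M M). snd p \<in> {\<omega>\<in>space M. G (fst p, \<omega>) \<in> C}}"
    by (auto simp: space_pair_measure)
  ultimately show ?thesis
    unfolding future_prob_def G_def by (intro measurable_measure) auto
qed

lemma ennreal_future_prob:
  assumes C: "C \<in> sets (PiM {j..<T} (\<lambda>_. borel))"
  shows "ennreal (future_prob j T C y)
       = (\<integral>\<^sup>+\<omega>. indicator C (\<lambda>t\<in>{j..<T}. chain_from f H y (noise_after j \<omega>) (t - j)) \<partial>M)"
proof -
  define E where "E = {\<omega>\<in>space M. (\<lambda>t\<in>{j..<T}. chain_from f H y (noise_after j \<omega>) (t - j)) \<in> C}"
  have "(\<lambda>\<omega>. \<lambda>t\<in>{j..<T}. chain_from f H y (noise_after j \<omega>) (t - j)) \<in> measurable M (PiM {j..<T} (\<lambda>_. borel))"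
    by (intro measurable_restrict) simp
  from measurable_sets[OF this C] have "E \<in> events"
    by (simp add: E_def vimage_def Int_def conj_commute)
  then have "ennreal (future_prob j T C y) = (\<integral>\<^sup>+\<omega>. indicator E \<omega> \<partial>M)"
    by (simp add: future_prob_def E_def emeasure_eq_measure)
  also have "\<dots> = (\<integral>\<^sup>+\<omega>. indicator C (\<lambda>t\<in>{j..<T}. chain_from f H y (noise_after j \<omega>) (t - j)) \<partial>M)"
    by (rule nn_integral_cong) (simp add: E_def split: split_indicator)
  finally show ?thesis .
qed

lemma emeasure_past_inter_future:
  assumes "i \<le> j" and B: "B \<in> sets (PiM {..i} (\<lambda>_. borel))" and C: "C \<in> sets (PiM {j..<T} (\<lambda>_. borel))"
  shows "emeasure M ({\<omega>\<in>space M. (\<lambda>t\<in>{..i}. X t \<omega>) \<in> B} \<inter> {\<omega>\<in>space M. (\<lambda>t\<in>{j..<T}. X t \<omega>) \<in> C})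
       = (\<integral>\<^sup>+\<omega>. indicator B (\<lambda>t\<in>{..i}. X t \<omega>) * ennreal (future_prob j T C (X j \<omega>)) \<partial>M)"
proof -
  define A where "A = {\<omega>\<in>space M. (\<lambda>t\<in>{..i}. X t \<omega>) \<in> B}"
  define F where "F = {\<omega>\<in>space M. (\<lambda>t\<in>{j..<T}. X t \<omega>) \<in> C}"
  define \<Phi> where "\<Phi> = (\<lambda>p. indicator C (\<lambda>t\<in>{j..<T}. chain_from f H (fst p) (snd p) (t - j)) :: ennreal)"
  have \<Phi>: "\<Phi> \<in> borel_measurable (borel \<Otimes>\<^sub>M PiM UNIV (\<lambda>_. borel))"
    using measurable_compose[OF future_path_measurable borel_measurable_indicator[OF C]]
    by (simp add: \<Phi>_def comp_def)
  have inner: "(\<integral>\<^sup>+\<omega>'. \<Phi> (y, noise_after j \<omega>') \<partial>M) = ennreal (future_prob j T C y)" for y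
    by (simp add: \<Phi>_def ennreal_future_prob[OF C])
  have "indicator (A \<inter> F) \<omega> = indicator B (\<lambda>t\<in>{..i}. X t \<omega>) * \<Phi> (X j \<omega>, noise_after j \<omega>)"
    if "\<omega> \<in> space M" for \<omega>
  proof -
    have "(\<lambda>t\<in>{j..<T}. X t \<omega>) = (\<lambda>t\<in>{j..<T}. chain_from f H (X j \<omega>) (noise_after j \<omega>) (t - j))"
      by (intro restrict_ext X_split) auto
    then show ?thesis
      using that by (simp add: A_def F_def \<Phi>_def split: split_indicator)
  qed
  moreover have "A \<inter> F \<in> events"
    unfolding A_def F_def using B C by (intro sets.Int X_path_event)
  ultimately have "emeasure M (A \<inter> F) = (\<integral>\<^sup>+\<omega>. indicator B (\<lambda>t\<in>{..i}. X t \<omega>) * \<Phi> (X j \<omega>, noise_after j \<omega>) \<partial>M)"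
    by (simp add: nn_integral_indicator[symmetric] cong: nn_integral_cong)
  also have "\<dots> = (\<integral>\<^sup>+\<omega>. indicator B (\<lambda>t\<in>{..i}. X t \<omega>) * (\<integral>\<^sup>+\<omega>'. \<Phi> (X j \<omega>, noise_after j \<omega>') \<partial>M) \<partial>M)"
    by (intro nn_integral_markov \<Phi> \<open>i \<le> j\<close> borel_measurable_indicator B)
  finally show ?thesis
    unfolding A_def F_def inner .
qed

lemma nn_integral_future_prob_markov:
  assumes "i < j" and B: "B \<in> sets (PiM {..i} (\<lambda>_. borel))" and C: "C \<in> sets (PiM {j..<T} (\<lambda>_. borel))"
  shows "(\<integral>\<^sup>+\<omega>. indicator B (\<lambda>t\<in>{..i}. X t \<omega>) * ennreal (future_prob j T C (X j \<omega>)) \<partial>M)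
       = (\<integral>\<^sup>+\<omega>. indicator B (\<lambda>t\<in>{..i}. X t \<omega>) *
            (\<integral>\<^sup>+y. ennreal (future_prob j T C y) \<partial>cond_law M f H V i (j - i) (X i \<omega>)) \<partial>M)"
proof -
  define \<Phi> where "\<Phi> = (\<lambda>p. ennreal (future_prob j T C (chain_from f H (fst p) (snd p) (j - i))))"
  have "(\<lambda>p. chain_from f H (fst p) (snd p) (j - i)) \<in> borel_measurable (borel \<Otimes>\<^sub>M PiM UNIV (\<lambda>_. borel))"
    by (rule chain_from_measurable) auto
  from measurable_compose[OF this future_prob_measurable[OF C]]
  have \<Phi>: "\<Phi> \<in> borel_measurable (borel \<Otimes>\<^sub>M PiM UNIV (\<lambda>_. borel))"
    unfolding \<Phi>_def by (simp add: comp_def)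
  have inner: "(\<integral>\<^sup>+\<omega>'. \<Phi> (y, noise_after i \<omega>') \<partial>M)
      = (\<integral>\<^sup>+y'. ennreal (future_prob j T C y') \<partial>cond_law M f H V i (j - i) y)" for y
    unfolding cond_law_eq \<Phi>_def using C by (simp add: nn_integral_distr)
  have "X j \<omega> = chain_from f H (X i \<omega>) (noise_after i \<omega>) (j - i)" for \<omega>
    using \<open>i < j\<close> by (intro X_split) simp
  then have "(\<integral>\<^sup>+\<omega>. indicator B (\<lambda>t\<in>{..i}. X t \<omega>) * ennreal (future_prob j T C (X j \<omega>)) \<partial>M)
      = (\<integral>\<^sup>+\<omega>. indicator B (\<lambda>t\<in>{..i}. X t \<omega>) * \<Phi> (X i \<omega>, noise_after i \<omega>) \<partial>M)"
    by (simp add: \<Phi>_def)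
  also have "\<dots> = (\<integral>\<^sup>+\<omega>. indicator B (\<lambda>t\<in>{..i}. X t \<omega>) * (\<integral>\<^sup>+\<omega>'. \<Phi> (X i \<omega>, noise_after i \<omega>') \<partial>M) \<partial>M)"
    by (intro nn_integral_markov \<Phi> order_refl borel_measurable_indicator B)
  finally show ?thesis
    unfolding inner .
qed

lemma emeasure_future:
  assumes C: "C \<in> sets (PiM {j..<T} (\<lambda>_. borel))"
  shows "emeasure M {\<omega>\<in>space M. (\<lambda>t\<in>{j..<T}. X t \<omega>) \<in> C}
       = (\<integral>\<^sup>+y. ennreal (future_prob j T C y) \<partial>distr M borel (X j))"
proof -
  have "{\<omega>\<in>space M. (\<lambda>t\<in>{..0}. X t \<omega>) \<in> space (PiM {..0} (\<lambda>_. borel))} = space M"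
    and "indicator (space (PiM {..0} (\<lambda>_. borel))) (\<lambda>t\<in>{..0}. X t \<omega>) = (1 :: ennreal)" for \<omega>
    by (auto simp: space_PiM)
  moreover have "(\<integral>\<^sup>+y. ennreal (future_prob j T C y) \<partial>distr M borel (X j))
      = (\<integral>\<^sup>+\<omega>. ennreal (future_prob j T C (X j \<omega>)) \<partial>M)"
    using measurable_compose[OF future_prob_measurable[OF C] measurable_ennreal]
    by (intro nn_integral_distr) (simp_all add: comp_def)
  moreover have "{\<omega>\<in>space M. (\<lambda>t\<in>{j..<T}. X t \<omega>) \<in> C} \<in> events"
    using C by (rule X_path_event)
  ultimately show ?thesis
    using emeasure_past_inter_future[of 0 j, OF _ sets.top C] by simp
qed

lemma nn_integral_cond_law_measurable:
  assumes "\<phi> \<in> borel_measurable borel"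
  shows "(\<lambda>x. \<integral>\<^sup>+y. ennreal (\<phi> y) \<partial>cond_law M f H V i k x) \<in> borel_measurable borel"
proof -
  have "(\<lambda>q. chain_from f H (fst q) (noise_after i (snd q)) k) \<in> borel_measurable (borel \<Otimes>\<^sub>M M)"
    unfolding noise_after_def by (rule chain_from_measurable) auto
  from measurable_compose[OF this assms]
  have "(\<lambda>x. \<integral>\<^sup>+\<omega>. ennreal (\<phi> (chain_from f H x (noise_after i \<omega>) k)) \<partial>M) \<in> borel_measurable borel"
    by (intro borel_measurable_nn_integral) (simp add: comp_def case_prod_beta')
  then show ?thesis
    unfolding cond_law_eq using assms by (simp add: nn_integral_distr)
qed

lemma past_future_dependence_le:
  assumes "i < j" and B: "B \<in> sets (PiM {..i} (\<lambda>_. borel))" and C: "C \<in> sets (PiM {j..<T} (\<lambda>_. borel))"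
    and "0 \<le> E" and E: "AE \<omega> in M. tv_dist (cond_law M f H V i (j - i) (X i \<omega>)) (distr M borel (X j)) \<le> E"
  defines "A \<equiv> {\<omega>\<in>space M. (\<lambda>t\<in>{..i}. X t \<omega>) \<in> B}" and "F \<equiv> {\<omega>\<in>space M. (\<lambda>t\<in>{j..<T}. X t \<omega>) \<in> C}"
  shows "\<bar>prob (A \<inter> F) - prob A * prob F\<bar> \<le> prob A * E"
proof -
  define \<phi> where "\<phi> = future_prob j T C"
  have \<phi>: "\<phi> \<in> borel_measurable borel" "\<And>y. 0 \<le> \<phi> y" "\<And>y. \<phi> y \<le> 1"
    using C by (simp_all add: \<phi>_def future_prob_def)
  define p where "p x = (\<integral>\<^sup>+y. ennreal (\<phi> y) \<partial>cond_law M f H V i (j - i) x)" for x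
  have A: "A \<in> events" and F: "F \<in> events"
    unfolding A_def F_def using B C by (auto intro: X_path_event)
  have "emeasure M (A \<inter> F) = (\<integral>\<^sup>+\<omega>. indicator A \<omega> * p (X i \<omega>) \<partial>M)"
  proof -
    have "indicator B (\<lambda>t\<in>{..i}. X t \<omega>) = (indicator A \<omega> :: ennreal)" if "\<omega> \<in> space M" for \<omega>
      using that by (simp add: A_def split: split_indicator)
    then show ?thesis
      using emeasure_past_inter_future[OF less_imp_le[OF \<open>i < j\<close>] B C]
        nn_integral_future_prob_markov[OF \<open>i < j\<close> B C]
      unfolding A_def F_def p_def \<phi>_def by (simp cong: nn_integral_cong)
  qed
  moreover have "AE \<omega> in M. p (X i \<omega>) \<le> emeasure M F + ennreal E \<and> emeasure M F \<le> p (X i \<omega>) + ennreal E"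
    using E unfolding F_def emeasure_future[OF C] p_def \<phi>_def[symmetric]
    by eventually_elim (intro nn_integral_near_of_tv_dist_le prob_space_cond_law prob_space_distr \<phi>;
        simp add: cond_law_eq \<phi>)
  moreover have "(\<lambda>\<omega>. p (X i \<omega>)) \<in> borel_measurable M"
    using measurable_compose[OF X_measurable nn_integral_cond_law_measurable[OF \<phi>(1)]]
    by (simp add: p_def comp_def)
  ultimately show ?thesis
    using A F \<open>0 \<le> E\<close> by (intro prob_inter_diff_le_of_nn_integral)
qed

lemma abs_gamma_dep_le_of_AE_tv_dist:
  assumes "i < j" "j < T" "0 \<le> E"
    and "AE \<omega> in M. tv_dist (cond_law M f H V i (j - i) (X i \<omega>)) (distr M borel (X j)) \<le> E"
  shows "\<bar>gamma_dep T (distr M (path_space T) (\<lambda>\<omega>. \<lambda>t\<in>{..<T}. X t \<omega>)) i j\<bar> \<le> sqrt (2 * E)"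
proof (rule abs_gamma_dep_le)
  have "restrict (\<lambda>t\<in>{..<T}. X t \<omega>) {..i} = (\<lambda>t\<in>{..i}. X t \<omega>)"
    and "restrict (\<lambda>t\<in>{..<T}. X t \<omega>) {j..<T} = (\<lambda>t\<in>{j..<T}. X t \<omega>)" for \<omega>
    using assms(1,2) by (auto simp: fun_eq_iff)
  then show "phi_mixing_le M (\<lambda>\<omega>. \<lambda>t\<in>{..<T}. X t \<omega>) T i j E"
    unfolding phi_mixing_le_def using past_future_dependence_le[OF \<open>i < j\<close> _ _ \<open>0 \<le> E\<close> assms(4)] by simp
qed (use assms in simp_all)

end

section \<open>Truncated noise\<close>

lemma sqrt_two_mul_add_le:
  fixes b \<delta> :: real and n T :: nat
  assumes "0 \<le> b" "0 \<le> \<delta>" "\<delta> \<le> 1 / real T ^ 3" "1 \<le> T" "n \<le> 2 * T"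
  shows "sqrt (2 * (b\<^sup>2 + real n * \<delta>)) \<le> sqrt 2 * b + 2 / real T"
proof -
  have "sqrt (2 * (b\<^sup>2 + real n * \<delta>)) \<le> sqrt (2 * b\<^sup>2) + sqrt (2 * real n * \<delta>)"
    using assms by (intro order_trans[OF _ sqrt_add_le_add_sqrt]) (simp_all add: algebra_simps)
  also have "sqrt (2 * b\<^sup>2) = sqrt 2 * b"
    using \<open>0 \<le> b\<close> by (simp add: real_sqrt_mult)
  also have "sqrt (2 * real n * \<delta>) \<le> sqrt ((2 / real T)\<^sup>2)"
  proof (rule real_sqrt_le_mono)
    have "2 * real n * \<delta> \<le> 2 * (2 * real T) * (1 / real T ^ 3)"
      using assms by (intro mult_mono) auto
    also have "\<dots> = (2 / real T)\<^sup>2"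
      using assms by (simp add: power2_eq_square power3_eq_cube field_simps)
    finally show "2 * real n * \<delta> \<le> (2 / real T)\<^sup>2" .
  qed
  finally show ?thesis by simp
qed

locale truncated_copy = prob_space M
  for M :: "'a measure" +
  fixes W W' :: "nat \<Rightarrow> 'a \<Rightarrow> real^'d" and R \<delta> :: real
  assumes indep_W: "indep_vars (\<lambda>_. borel) W UNIV"
    and indep_W': "indep_vars (\<lambda>_. borel) W' UNIV"
    and same_law: "\<And>t. distr M borel (W t) = distr M borel (W' t)"
    and tail_le: "\<And>t. prob {\<omega>\<in>space M. R < norm (W' t \<omega>)} \<le> \<delta>"
begin

definition trunc :: "nat \<Rightarrow> 'a \<Rightarrow> real^'d" where
  "trunc t \<omega> = (if norm (W' t \<omega>) \<le> R then W' t \<omega> else 0)"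

lemma W_measurable[measurable]: "W t \<in> borel_measurable M"
  using indep_W unfolding indep_vars_def by auto

lemma W'_measurable[measurable]: "W' t \<in> borel_measurable M"
  using indep_W' unfolding indep_vars_def by auto

lemma trunc_measurable[measurable]: "trunc t \<in> borel_measurable M"
  unfolding trunc_def by measurable

lemma indep_trunc: "indep_vars (\<lambda>_. borel) trunc UNIV"
proof -
  have "indep_vars (\<lambda>_. borel) (\<lambda>t \<omega>. (\<lambda>x. if norm x \<le> R then x else 0) (W' t \<omega>)) UNIV"
    by (rule indep_vars_compose2[OF indep_W']) measurable
  then show ?thesis unfolding trunc_def by simp
qed

lemma distr_restrict_W_eq_W':
  assumes I: "finite I" "I \<noteq> {}" and G: "G \<in> measurable (PiM I (\<lambda>_. borel)) N"
  shows "distr M N (\<lambda>\<omega>. G (\<lambda>s\<in>I. W s \<omega>)) = distr M N (\<lambda>\<omega>. G (\<lambda>s\<in>I. W' s \<omega>))"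
proof -
  have "distr M (PiM I (\<lambda>_. borel)) (\<lambda>\<omega>. \<lambda>s\<in>I. W s \<omega>) = PiM I (\<lambda>s. distr M borel (W s))"
    using indep_vars_iff_distr_eq_PiM[where I=I and M'="\<lambda>_. borel" and X=W] I indep_vars_subset[OF indep_W] by auto
  also have "\<dots> = distr M (PiM I (\<lambda>_. borel)) (\<lambda>\<omega>. \<lambda>s\<in>I. W' s \<omega>)"
    using indep_vars_iff_distr_eq_PiM[where I=I and M'="\<lambda>_. borel" and X=W'] I indep_vars_subset[OF indep_W']
    by (auto simp: same_law)
  finally have "distr (distr M (PiM I (\<lambda>_. borel)) (\<lambda>\<omega>. \<lambda>s\<in>I. W s \<omega>)) N G
      = distr (distr M (PiM I (\<lambda>_. borel)) (\<lambda>\<omega>. \<lambda>s\<in>I. W' s \<omega>)) N G"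
    by simp
  then show ?thesis
    using G by (simp add: distr_distr measurable_restrict comp_def)
qed

lemma tv_dist_restrict_W_trunc_le:
  assumes I: "finite I" "I \<noteq> {}" and G: "G \<in> borel_measurable (PiM I (\<lambda>_. borel))"
  shows "tv_dist (distr M borel (\<lambda>\<omega>. G (\<lambda>s\<in>I. W s \<omega>))) (distr M borel (\<lambda>\<omega>. G (\<lambda>s\<in>I. trunc s \<omega>)))
    \<le> real (card I) * \<delta>"
proof -
  define Bad where "Bad = (\<Union>s\<in>I. {\<omega>\<in>space M. R < norm (W' s \<omega>)})"
  have Bad: "Bad \<in> events" unfolding Bad_def using I by measurable
  have "G (\<lambda>s\<in>I. W' s \<omega>) = G (\<lambda>s\<in>I. trunc s \<omega>)" if "\<omega> \<in> space M" "\<omega> \<notin> Bad" for \<omega>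
    using that by (intro arg_cong[where f=G] restrict_ext) (auto simp: trunc_def Bad_def)
  then have "tv_dist (distr M borel (\<lambda>\<omega>. G (\<lambda>s\<in>I. W' s \<omega>))) (distr M borel (\<lambda>\<omega>. G (\<lambda>s\<in>I. trunc s \<omega>)))
      \<le> prob Bad"
    using G by (intro tv_dist_distr_le_measure_disagreement Bad) (auto intro!: measurable_restrict)
  also have "prob Bad \<le> (\<Sum>s\<in>I. prob {\<omega>\<in>space M. R < norm (W' s \<omega>)})"
    unfolding Bad_def using I(1) by (intro finite_measure_subadditive_finite) auto
  also have "\<dots> \<le> real (card I) * \<delta>"
    using sum_mono[of I "\<lambda>s. prob {\<omega>\<in>space M. R < norm (W' s \<omega>)}" "\<lambda>_. \<delta>"] tail_le by simp
  finally show ?thesis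
    using distr_restrict_W_eq_W'[OF I G] by simp
qed

lemma tv_dist_cond_law_trunc_le:
  assumes f: "f \<in> borel_measurable borel" and "0 < k"
  shows "tv_dist (cond_law M f H W i k x) (cond_law M f H trunc i k x) \<le> real k * \<delta>"
proof -
  define I where "I = {Suc i..i + k}"
  define G where "G w = chain_from f H x (\<lambda>s. w (i + Suc s)) k" for w :: "nat \<Rightarrow> real^'d"
  have I: "finite I" "I \<noteq> {}" "card I = k" using \<open>0 < k\<close> by (auto simp: I_def)
  have G: "G \<in> borel_measurable (PiM I (\<lambda>_. borel))"
    unfolding G_def by (rule chain_from_measurable[OF f]) (auto simp: I_def)
  have "G (\<lambda>s\<in>I. U s \<omega>) = chain_from f H x (\<lambda>s. U (i + Suc s) \<omega>) k" for U :: "nat \<Rightarrow> 'a \<Rightarrow> real^'d" and \<omega>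
    unfolding G_def by (rule chain_from_cong) (auto simp: I_def)
  then show ?thesis
    using tv_dist_restrict_W_trunc_le[OF I(1,2) G] by (simp add: cond_law_def I(3))
qed

lemma tv_dist_proc_trunc_le:
  assumes f: "f \<in> borel_measurable borel"
  shows "tv_dist (distr M borel (proc f H W j)) (distr M borel (proc f H trunc j)) \<le> real (j + 1) * \<delta>"
proof -
  have G: "(\<lambda>w. driven_chain f H w j) \<in> borel_measurable (PiM {..j} (\<lambda>_. borel))"
    by (rule driven_chain_measurable[OF f]) auto
  have "proc f H U j = (\<lambda>\<omega>. driven_chain f H (\<lambda>s\<in>{..j}. U s \<omega>) j)" for U :: "nat \<Rightarrow> 'a \<Rightarrow> real^'d"
    by (simp add: fun_eq_iff proc_eq_driven_chain driven_chain_restrict)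
  then show ?thesis
    using tv_dist_restrict_W_trunc_le[OF _ _ G] by simp
qed

lemma tv_dist_trunc_kernel_le:
  assumes f: "f \<in> borel_measurable borel" and "i < j"
  shows "tv_dist (cond_law M f H trunc i (j - i) x) (distr M borel (proc f H trunc j))
    \<le> tv_dist (cond_law M f H W i (j - i) x) (distr M borel (proc f H W j)) + real (j - i + (j + 1)) * \<delta>"
proof -
  let ?K = "\<lambda>U. cond_law M f H U i (j - i) x" and ?L = "\<lambda>U. distr M borel (proc f H U j)"
  have prob_K: "prob_space (?K U)" and prob_L: "prob_space (?L U)" if "\<And>s. U s \<in> borel_measurable M" for U
    using that unfolding cond_law_def
    by (auto intro!: prob_space_distr chain_from_measurable[OF f] proc_measurable[OF f])
  have "tv_dist (?K trunc) (?L trunc) \<le> tv_dist (?K trunc) (?K W) + tv_dist (?K W) (?L trunc)"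
    by (intro tv_dist_triangle prob_K prob_L) (simp_all add: cond_law_def)
  also have "tv_dist (?K W) (?L trunc) \<le> tv_dist (?K W) (?L W) + tv_dist (?L W) (?L trunc)"
    by (intro tv_dist_triangle prob_K prob_L) (simp_all add: cond_law_def)
  also have "tv_dist (?K trunc) (?K W) \<le> real (j - i) * \<delta>"
    using tv_dist_cond_law_trunc_le[OF f, of "j - i" H i x] tv_dist_commute[of "?K W" "?K trunc"] \<open>i < j\<close>
    by (simp add: cond_law_def)
  also have "tv_dist (?L W) (?L trunc) \<le> real (j + 1) * \<delta>"
    by (rule tv_dist_proc_trunc_le[OF f])
  finally show ?thesis by (simp add: algebra_simps)
qed

lemma abs_gamma_dep_trunc_le:
  assumes f: "f \<in> borel_measurable borel" and "0 < k" "i + k < T" "0 \<le> b" "\<delta> \<le> 1 / real T ^ 3"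
    and b: "esssup (distr M borel (proc f H trunc i))
      (\<lambda>x. ereal (sqrt (tv_dist (cond_law M f H W i k x) (distr M borel (proc f H W (i + k)))))) \<le> ereal b"
  shows "\<bar>gamma_dep T (distr M (path_space T) (\<lambda>\<omega>. \<lambda>t\<in>{..<T}. proc f H trunc t \<omega>)) i (i + k)\<bar>
    \<le> sqrt 2 * b + 2 / real T"
proof -
  interpret noise_driven_process M f H trunc
    by unfold_locales (use f indep_trunc in auto)
  define a where "a x = tv_dist (cond_law M f H W i k x) (distr M borel (proc f H W (i + k)))" for x
  have a_nonneg: "0 \<le> a x" for x
    unfolding a_def using f by (intro tv_dist_nonneg prob_space_cond_law prob_space_distr proc_measurable) auto
  have "AE x in distr M borel (X i). ereal (sqrt (a x)) \<le> ereal b"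
    using esssup_AE[of "\<lambda>x. ereal (sqrt (a x))" "distr M borel (X i)"] b unfolding a_def
    by (elim eventually_mono) (erule order_trans)
  then have "AE \<omega> in M. sqrt (a (X i \<omega>)) \<le> b"
    by (auto dest: AE_distrD[OF X_measurable])
  then have "AE \<omega> in M. a (X i \<omega>) \<le> b\<^sup>2"
    by eventually_elim (metis a_nonneg real_sqrt_le_iff real_sqrt_unique \<open>0 \<le> b\<close>)
  moreover have kernel: "tv_dist (cond_law M f H trunc i k x) (distr M borel (X (i + k)))
      \<le> a x + real (i + 2 * k + 1) * \<delta>" for x
    using tv_dist_trunc_kernel_le[OF f, of i "i + k"] \<open>0 < k\<close> by (simp add: a_def add.commute)
  ultimately have "AE \<omega> in M. tv_dist (cond_law M f H trunc i k (X i \<omega>)) (distr M borel (X (i + k)))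
      \<le> b\<^sup>2 + real (i + 2 * k + 1) * \<delta>"
    by (auto elim!: eventually_mono intro: order_trans[OF kernel])
  moreover have "0 \<le> \<delta>"
    using tail_le[of 0] measure_nonneg[of M] by (meson order_trans)
  ultimately have "\<bar>gamma_dep T (distr M (path_space T) (\<lambda>\<omega>. \<lambda>t\<in>{..<T}. X t \<omega>)) i (i + k)\<bar>
      \<le> sqrt (2 * (b\<^sup>2 + real (i + 2 * k + 1) * \<delta>))"
    using \<open>0 < k\<close> \<open>i + k < T\<close> by (intro abs_gamma_dep_le_of_AE_tv_dist) auto
  also have "\<dots> \<le> sqrt 2 * b + 2 / real T"
    using assms \<open>0 \<le> \<delta>\<close> by (intro sqrt_two_mul_add_le) auto
  finally show ?thesis .
qed

end

lemma esssup_nonneg: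
  assumes "prob_space N" "\<And>x. 0 \<le> g x"
  shows "0 \<le> esssup N (g :: _ \<Rightarrow> ereal)"
proof (cases "g \<in> borel_measurable N")
  case True
  then have "esssup N (\<lambda>x. 0) \<le> esssup N g"
    using assms(2) by (intro esssup_mono) auto
  then show ?thesis
    using assms(1) by (simp add: esssup_const prob_space.emeasure_space_1)
qed (simp add: esssup_non_measurable)

theorem proposition12:
  fixes M :: "'a measure"
    and f :: "real^'d \<Rightarrow> real^'d"
    and H :: "real^'d^'d"
    and W W' :: "nat \<Rightarrow> 'a \<Rightarrow> real^'d"
    and T :: nat and R :: real
  assumes "prob_space M"
    and "T \<ge> 2"
    and "f \<in> borel_measurable borel"
    and "R \<ge> sqrt (real CARD('d)) + sqrt (6 * ln (real T))"
    and "prob_space.indep_vars M (\<lambda>_. borel) W UNIV"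
    and "\<And>t. distributed M lborel (W t) (\<lambda>x. ennreal (std_gauss_density x))"
    and "prob_space.indep_vars M (\<lambda>_. borel) W' UNIV"
    and "\<And>t. distributed M lborel (W' t) (\<lambda>x. ennreal (std_gauss_density x))"
  shows
    "let Wbar = (\<lambda>t \<omega>. if norm (W' t \<omega>) \<le> R then W' t \<omega> else 0);
         X = proc f H W;
         Xbar = proc f H Wbar;
         P_Xbar = distr M (path_space T) (\<lambda>\<omega>. \<lambda>t\<in>{..<T}. Xbar t \<omega>)
     in ereal (op_norm T (gamma_dep T P_Xbar))
        \<le> 3 + ereal (sqrt 2) *
            (\<Sum>k = 1..T - 1. Max ((\<lambda>t. esssup (distr M borel (Xbar t))
                 (\<lambda>x. ereal (sqrt (tv_dist (cond_law M f H W t k x) (distr M borel (X (t + k)))))))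
               ` {0..T - 1 - k}))"
proof -
  interpret prob_space M by (rule assms(1))
  have same_law: "distr M borel (W t) = distr M borel (W' t)" for t
    using distributed_distr_eq_density[OF assms(6)] distributed_distr_eq_density[OF assms(8)]
    by (metis distr_cong sets_lborel)
  have tail: "prob {\<omega>\<in>space M. R < norm (W' t \<omega>)} \<le> 1 / real T ^ 3" for t
    using std_gauss_norm_tail_le_inverse_cube[OF assms(8) _ assms(4)] assms(2) by simp
  interpret truncated_copy M W W' R "1 / real T ^ 3"
    by unfold_locales (use assms(5,7) same_law tail in auto)
  have tv_nonneg: "0 \<le> tv_dist (cond_law M f H W t k x) (distr M borel (proc f H W (t + k)))" for t k x
    using assms(3) by (intro tv_dist_nonneg prob_space_cond_law prob_space_distr proc_measurable) auto
  have Wbar: "(\<lambda>t \<omega>. if norm (W' t \<omega>) \<le> R then W' t \<omega> else 0) = trunc"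
    by (simp add: fun_eq_iff trunc_def)
  show ?thesis
    unfolding Let_def Wbar using assms(2,3)
    by (intro op_norm_le_of_ereal_entry_bounds esssup_nonneg prob_space_distr proc_measurable
        abs_gamma_dep_trunc_le) (auto simp: gamma_dep_def tv_nonneg)
qed

end
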